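(* Consider a common-payoff finite-horizon partially observable stochastic game with finite action sets, and let $\pi^t$ be a joint policy that assigns positive probability to every action at every decision point. For a stepsize $\eta > 0$, define the joint policy $\pi^{t+1}$ by performing a mirror descent (hedge) update simultaneously at every decision point of every player with action-value feedback: for each player $i$ and each decision point $h_i$ reached with positive probability under $\pi^t$, $$\pi^{t+1}_i(h_i) = \arg\max_{\bar{\pi}' \in \Delta(\mathbb{A}_i)} \langle \bar{\pi}', q_i^{\pi^t}(h_i)\rangle - \tfrac{1}{\eta}\mathrm{KL}(\bar{\pi}', \pi_i^t(h_i)), \quad\text{i.e.}\quad \pi^{t+1}_i(h_i)(a) \propto \pi^t_i(h_i)(a)\, e^{\eta\, q_i^{\pi^t}(h_i, a)}.$$ Then for every sufficiently small stepsize $\eta > 0$, $\mathcal{J}(\pi^{t+1}) \geq \mathcal{J}(\pi^t)$, and this inequality is strict if $\pi^{t+1} \neq \pi^t$.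
   Context: A finite-horizon partially observable stochastic game (POSG) consists of finite sets of Markov states $\mathbb{S}$, per-player action sets $\mathbb{A}_i$ and observation sets $\mathbb{O}_i$, joint actions $\mathbb{A} = \times_i \mathbb{A}_i$, reward functions $\mathcal{R}_i \colon \mathbb{S}\times\mathbb{A}\to\mathbb{R}$, a transition function $\mathcal{T}\colon \mathbb{S}\times\mathbb{A}\to\Delta(\mathbb{S})$ and observation functions $\mathcal{O}_i \colon \mathbb{S}\times\mathbb{A}\to\mathbb{O}_i$. Player $i$'s decision points are $h_i \in \mathbb{H}_i = \bigcup_t (\mathbb{O}_i\times\mathbb{A}_i)^t\times\mathbb{O}_i$; histories are $h \in \mathbb{H} = \times_i \mathbb{H}_i$. A policy for player $i$ is a map $\pi_i\colon \mathbb{H}_i \to \Delta(\mathbb{A}_i)$, and a joint policy is $\pi = (\pi_i)_i$; $\mathcal{P}_\pi$, $\mathbb{E}_\pi$ denote probabilities/expectations induced by $\pi$. The expected return of player $i$ is $\mathcal{J}_i(\pi) = \mathbb{E}_\pi[\sum_t \mathcal{R}_i(S^t, A^t)]$; the game is common-payoff if all players' returns coincide, and then $\mathcal{J}$ denotes this common expected return. For a history $h^t$ at time $t$, $G^{\geq t} = \sum_{t'\geq t}\mathcal{R}_i(S^{t'},A^{t'})$, $v_i^\pi(h^t) = \mathbb{E}_\pi[G^{\geq t}\mid h^t]$, $q_i^\pi(h^t,a_i) = \mathbb{E}_\pi[\mathcal{R}_i(S^t,A^t) + v_i^\pi(H^{t+1})\mid h^t, a_i]$, and the action value at a decision point is $q_i^\pi(h_i^t,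 a_i) = \mathbb{E}_\pi[q_i^\pi(H^t,a_i)\mid h_i^t]$, with $q_i^\pi(h_i)$ the vector $(q_i^\pi(h_i,a))_{a\in\mathbb{A}_i}$. $\mathrm{KL}$ is the Kullback–Leibler divergence. (At decision points reached with probability zero the update does not affect $\mathcal{J}$.) *)

theory Defs
  imports "HOL-Probability.Probability"
begin

text \<open>Dynamics: S^0 ~ init; A^t ~ product of the players' policies at their decision points;
  S^(t+1) ~ trans S^t A^t.  Player i observes obs0 i S^0 at time 0 and
  obs i S^(t+1) A^t at time t+1.  Rewards rew i S^t A^t for t < horizon.\<close>

record ('s, 'i, 'a, 'o) posg =
  init :: "'s pmf"
  trans :: "'s \<Rightarrow> ('i \<Rightarrow> 'a) \<Rightarrow> 's pmf"
  obs0 :: "'i \<Rightarrow> 's \<Rightarrow> 'o"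
  obs :: "'i \<Rightarrow> 's \<Rightarrow> ('i \<Rightarrow> 'a) \<Rightarrow> 'o"
  rew :: "'i \<Rightarrow> 's \<Rightarrow> ('i \<Rightarrow> 'a) \<Rightarrow> real"
  acts :: "'i \<Rightarrow> 'a set"
  horizon :: nat

definition wf_posg :: "('s::finite, 'i::finite, 'a, 'o::finite) posg \<Rightarrow> bool" where
  "wf_posg G \<longleftrightarrow> (\<forall>i. finite (acts G i) \<and> acts G i \<noteq> {})"

text \<open>Decision point of a player: ((o^0,a^0),...,(o^(t-1),a^(t-1))), o^t).\<close>
type_synonym ('o, 'a) dpoint = "('o \<times> 'a) list \<times> 'o"

text \<open>Observation of player i at time k, given states ss = [s^0..s^t] and joint actions
  acs = [a^0..a^(t-1)].\<close>
definition obs_at :: "('s, 'i, 'a, 'o) posg \<Rightarrow> 'i \<Rightarrow> 's list \<Rightarrow> ('i \<Rightarrow> 'a) list \<Rightarrow> nat \<Rightarrow> 'o" where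
  "obs_at G i ss acs k = (if k = 0 then obs0 G i (ss ! 0) else obs G i (ss ! k) (acs ! (k - 1)))"

definition hist :: "('s, 'i, 'a, 'o) posg \<Rightarrow> 'i \<Rightarrow> ('s \<times> ('i \<Rightarrow> 'a)) list \<Rightarrow> 's \<Rightarrow> ('o, 'a) dpoint" where
  "hist G i past s =
    (let ss = map fst past @ [s]; acs = map snd past; t = length past
     in (zip (map (obs_at G i ss acs) [0..<t]) (map (\<lambda>a. a i) acs), obs_at G i ss acs t))"

type_synonym ('i, 'o, 'a) policy = "'i \<Rightarrow> ('o, 'a) dpoint \<Rightarrow> 'a pmf"

primrec gen :: "('s, 'i::finite, 'a, 'o) posg \<Rightarrow> ('i, 'o, 'a) policy \<Rightarrow> nat
    \<Rightarrow> ('s \<times> ('i \<Rightarrow> 'a)) list \<Rightarrow> 's \<Rightarrow> ('s \<times> ('i \<Rightarrow> 'a)) list pmf" where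
  "gen G \<pi> 0 past s = return_pmf []"
| "gen G \<pi> (Suc n) past s =
     bind_pmf (Pi_pmf UNIV undefined (\<lambda>i. \<pi> i (hist G i past s)))
       (\<lambda>a. bind_pmf (trans G s a)
          (\<lambda>s'. map_pmf (\<lambda>rest. (s, a) # rest) (gen G \<pi> n (past @ [(s, a)]) s')))"

definition traj :: "('s, 'i::finite, 'a, 'o) posg \<Rightarrow> ('i, 'o, 'a) policy \<Rightarrow> ('s \<times> ('i \<Rightarrow> 'a)) list pmf" where
  "traj G \<pi> = bind_pmf (init G) (\<lambda>s. gen G \<pi> (horizon G) [] s)"

definition Hi :: "('s, 'i, 'a, 'o) posg \<Rightarrow> 'i \<Rightarrow> nat \<Rightarrow> ('s \<times> ('i \<Rightarrow> 'a)) list \<Rightarrow> ('o, 'a) dpoint" where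
  "Hi G i t tr = hist G i (take t tr) (fst (tr ! t))"

definition Hj :: "('s, 'i, 'a, 'o) posg \<Rightarrow> nat \<Rightarrow> ('s \<times> ('i \<Rightarrow> 'a)) list \<Rightarrow> 'i \<Rightarrow> ('o, 'a) dpoint" where
  "Hj G t tr = (\<lambda>i. Hi G i t tr)"

definition ret :: "('s, 'i, 'a, 'o) posg \<Rightarrow> 'i \<Rightarrow> ('s \<times> ('i \<Rightarrow> 'a)) list \<Rightarrow> real" where
  "ret G i tr = sum_list (map (\<lambda>(s, a). rew G i s a) tr)"

definition J :: "('s, 'i::finite, 'a, 'o) posg \<Rightarrow> 'i \<Rightarrow> ('i, 'o, 'a) policy \<Rightarrow> real" where
  "J G i \<pi> = measure_pmf.expectation (traj G \<pi>) (ret G i)"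

definition Gge :: "('s, 'i, 'a, 'o) posg \<Rightarrow> 'i \<Rightarrow> nat \<Rightarrow> ('s \<times> ('i \<Rightarrow> 'a)) list \<Rightarrow> real" where
  "Gge G i t tr = (\<Sum>k\<in>{t..<length tr}. rew G i (fst (tr ! k)) (snd (tr ! k)))"

definition cexp :: "'x pmf \<Rightarrow> ('x \<Rightarrow> bool) \<Rightarrow> ('x \<Rightarrow> real) \<Rightarrow> real" where
  "cexp p P f = measure_pmf.expectation p (\<lambda>x. if P x then f x else 0) / measure_pmf.prob p {x. P x}"

definition vval :: "('s, 'i::finite, 'a, 'o) posg \<Rightarrow> 'i \<Rightarrow> ('i, 'o, 'a) policy \<Rightarrow> nat
    \<Rightarrow> ('i \<Rightarrow> ('o, 'a) dpoint) \<Rightarrow> real" where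
  "vval G i \<pi> t h = cexp (traj G \<pi>) (\<lambda>tr. Hj G t tr = h) (Gge G i t)"

definition qjoint :: "('s, 'i::finite, 'a, 'o) posg \<Rightarrow> 'i \<Rightarrow> ('i, 'o, 'a) policy \<Rightarrow> nat
    \<Rightarrow> ('i \<Rightarrow> ('o, 'a) dpoint) \<Rightarrow> 'a \<Rightarrow> real" where
  "qjoint G i \<pi> t h a = cexp (traj G \<pi>) (\<lambda>tr. Hj G t tr = h \<and> snd (tr ! t) i = a)
      (\<lambda>tr. rew G i (fst (tr ! t)) (snd (tr ! t)) + vval G i \<pi> (Suc t) (Hj G (Suc t) tr))"

definition qdp :: "('s, 'i::finite, 'a, 'o) posg \<Rightarrow> 'i \<Rightarrow> ('i, 'o, 'a) policy
    \<Rightarrow> ('o, 'a) dpoint \<Rightarrow> 'a \<Rightarrow> real" where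
  "qdp G i \<pi> h a = (let t = length (fst h) in
      cexp (traj G \<pi>) (\<lambda>tr. Hi G i t tr = h) (\<lambda>tr. qjoint G i \<pi> t (Hj G t tr) a))"

definition reached :: "('s, 'i::finite, 'a, 'o) posg \<Rightarrow> ('i, 'o, 'a) policy \<Rightarrow> 'i \<Rightarrow> ('o, 'a) dpoint \<Rightarrow> bool" where
  "reached G \<pi> i h \<longleftrightarrow> length (fst h) < horizon G \<and>
     measure_pmf.prob (traj G \<pi>) {tr. Hi G i (length (fst h)) tr = h} > 0"

definition valid_policy :: "('s, 'i, 'a, 'o) posg \<Rightarrow> ('i, 'o, 'a) policy \<Rightarrow> bool" where
  "valid_policy G \<pi> \<longleftrightarrow> (\<forall>i h. set_pmf (\<pi> i h) \<subseteq> acts G i)"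

definition fully_mixed :: "('s, 'i, 'a, 'o) posg \<Rightarrow> ('i, 'o, 'a) policy \<Rightarrow> bool" where
  "fully_mixed G \<pi> \<longleftrightarrow> (\<forall>i h. set (map snd (fst h)) \<subseteq> acts G i \<longrightarrow> (\<forall>a\<in>acts G i. pmf (\<pi> i h) a > 0))"

definition common_payoff :: "('s, 'i::finite, 'a, 'o) posg \<Rightarrow> bool" where
  "common_payoff G \<longleftrightarrow> (\<forall>\<pi>. valid_policy G \<pi> \<longrightarrow> (\<forall>i j. J G i \<pi> = J G j \<pi>))"

definition hedge_update :: "('s, 'i::finite, 'a, 'o) posg \<Rightarrow> real \<Rightarrow> ('i, 'o, 'a) policy
    \<Rightarrow> ('i, 'o, 'a) policy \<Rightarrow> bool" where
  "hedge_update G \<eta> \<pi> \<pi>' \<longleftrightarrow> (\<forall>i h.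
     (if reached G \<pi> i h then
        (\<forall>a. pmf (\<pi>' i h) a =
              pmf (\<pi> i h) a * exp (\<eta> * qdp G i \<pi> h a) /
              (\<Sum>b\<in>acts G i. pmf (\<pi> i h) b * exp (\<eta> * qdp G i \<pi> h b)))
      else \<pi>' i h = \<pi> i h))"

end

theory Submission
  imports Defs
begin

text \<open>
  Along the hedge path \<open>\<eta> \<mapsto> \<pi>\<^sub>\<eta>\<close>, with \<open>\<pi>\<^sub>0 = \<pi>\<close>, every action probability is
  \<open>\<pi>(a|h)\<close> times a smooth weight whose derivative at \<open>\<eta> = 0\<close> is the advantage
  \<open>q(h,a) - \<Sum>\<^sub>b \<pi>(b|h) q(h,b)\<close>. The likelihood-ratio formula therefore expresses the
  derivative of \<open>J(\<pi>\<^sub>\<eta>)\<close> at \<open>0\<close> as the expected return times the sum of the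
  advantages of all actions taken. In a common-payoff game the term of player \<open>j\<close> may be
  evaluated with \<open>j\<close>'s own return; since an action value is the expected return-to-go after the
  action, and rewards collected earlier are annihilated by the centred advantages, that term is
  the sum over \<open>t\<close> and \<open>h\<close> of \<open>P(H\<^sub>j\<^sup>t = h)\<close> times the variance of \<open>q\<^sub>j(h,\<cdot>)\<close>
  under \<open>\<pi>\<^sub>j(h)\<close>. If some reached decision point has non-constant action values the
  derivative is therefore positive and \<open>J\<close> increases strictly for small \<open>\<eta>\<close>; otherwise the
  hedge update leaves \<open>\<pi>\<close> unchanged.
\<close>

lemma expectation_eq_sum_pmf:
  fixes f :: "'x \<Rightarrow> real"
  assumes "finite S" "set_pmf p \<subseteq> S"
  shows "measure_pmf.expectation p f = (\<Sum>x\<in>S. pmf p x * f x)"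
  using assms by (subst integral_measure_pmf_real[where A = S]) (auto simp: mult.commute)

lemma expectation_cong_set_pmf:
  fixes f g :: "'x \<Rightarrow> real"
  shows "(\<And>x. x \<in> set_pmf p \<Longrightarrow> f x = g x) \<Longrightarrow>
    measure_pmf.expectation p f = measure_pmf.expectation p g"
  by (intro integral_cong_AE) (auto simp: AE_measure_pmf_iff)

lemma prob_eq_expectation_indicator:
  "measure_pmf.prob p {x. P x} = measure_pmf.expectation p (\<lambda>x. if P x then 1 else 0)"
proof -
  have "(\<lambda>x. if P x then 1 else 0 :: real) = indicator {x. P x}"
    by (auto simp: indicator_def)
  then show ?thesis by simp
qed

lemma expectation_bind_pmf:
  fixes f :: "'y \<Rightarrow> real"
  assumes "finite A" "set_pmf M \<subseteq> A" "\<And>x. x \<in> A \<Longrightarrow> finite (set_pmf (N x))"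
  shows "measure_pmf.expectation (bind_pmf M N) f =
    measure_pmf.expectation M (\<lambda>x. measure_pmf.expectation (N x) f)"
  using pmf_expectation_bind[where p = M and f = N and h = f, OF assms(1,3,2)]
    expectation_eq_sum_pmf[OF assms(1,2)]
  by simp

lemma prob_mult_cexp:
  fixes f :: "'x \<Rightarrow> real"
  shows "measure_pmf.prob p {x. P x} * cexp p P f =
    measure_pmf.expectation p (\<lambda>x. if P x then f x else 0)"
proof (cases "measure_pmf.prob p {x. P x} = 0")
  case True
  then have "\<And>x. x \<in> set_pmf p \<Longrightarrow> \<not> P x"
    by (auto simp: measure_pmf_zero_iff)
  then have "measure_pmf.expectation p (\<lambda>x. if P x then f x else 0) = measure_pmf.expectation p (\<lambda>_. 0)"
    by (intro expectation_cong_set_pmf) auto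
  with True show ?thesis by simp
qed (simp add: cexp_def)

lemma expectation_comp_eq_sum_prob:
  fixes \<phi> :: "'v \<Rightarrow> real"
  assumes "finite S" "set_pmf p \<subseteq> S"
  shows "measure_pmf.expectation p (\<lambda>x. \<phi> (K x)) =
    (\<Sum>v\<in>K ` S. measure_pmf.prob p {x. K x = v} * \<phi> v)"
proof -
  have "measure_pmf.expectation p (\<lambda>x. \<phi> (K x)) = measure_pmf.expectation (map_pmf K p) \<phi>"
    by simp
  also have "\<dots> = (\<Sum>v\<in>K ` S. pmf (map_pmf K p) v * \<phi> v)"
    using assms by (intro expectation_eq_sum_pmf) auto
  finally show ?thesis
    by (simp add: pmf_map vimage_def)
qed

lemma expectation_eq_sum_fibres:
  fixes f :: "'x \<Rightarrow> real"
  assumes "finite S" "set_pmf p \<subseteq> S"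
  shows "measure_pmf.expectation p f =
    (\<Sum>v\<in>K ` S. measure_pmf.expectation p (\<lambda>x. if K x = v then f x else 0))"
proof -
  have "measure_pmf.expectation p f = (\<Sum>x\<in>S. \<Sum>v\<in>K ` S. if K x = v then pmf p x * f x else 0)"
    using assms by (simp add: expectation_eq_sum_pmf sum.delta')
  also have "\<dots> = (\<Sum>v\<in>K ` S. measure_pmf.expectation p (\<lambda>x. if K x = v then f x else 0))"
    using assms by (subst sum.swap) (auto simp: expectation_eq_sum_pmf if_distrib intro!: sum.cong)
  finally show ?thesis .
qed

lemma expectation_cexp_fibres:
  fixes X :: "'x \<Rightarrow> real"
  assumes S: "finite S" "set_pmf p \<subseteq> S"
    and prob_B: "\<And>v. Q v \<Longrightarrow> measure_pmf.prob p {x. K x = v \<and> B x} = c * measure_pmf.prob p {x. K x = v}"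
  shows "c * measure_pmf.expectation p (\<lambda>x. if Q (K x) then cexp p (\<lambda>y. K y = K x \<and> B y) X else 0) =
    measure_pmf.expectation p (\<lambda>x. if Q (K x) \<and> B x then X x else 0)"
proof -
  have "c * measure_pmf.expectation p (\<lambda>x. if Q (K x) then cexp p (\<lambda>y. K y = K x \<and> B y) X else 0) =
      (\<Sum>v\<in>K ` S. if Q v then measure_pmf.prob p {x. K x = v \<and> B x} * cexp p (\<lambda>y. K y = v \<and> B y) X else 0)"
    by (auto simp: expectation_comp_eq_sum_prob[OF S, where \<phi> = "\<lambda>v. if Q v then cexp p (\<lambda>y. K y = v \<and> B y) X else 0"]
        sum_distrib_left prob_B mult.assoc intro!: sum.cong)
  also have "\<dots> = (\<Sum>v\<in>K ` S. measure_pmf.expectation p (\<lambda>x. if K x = v then (if Q (K x) \<and> B x then X x else 0) else 0))"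
  proof (intro sum.cong refl)
    fix v
    have "(\<lambda>x. if K x = v then (if Q (K x) \<and> B x then X x else 0) else 0) =
        (\<lambda>x. if Q v \<and> (K x = v \<and> B x) then X x else 0)"
      by auto
    then show "(if Q v then measure_pmf.prob p {x. K x = v \<and> B x} * cexp p (\<lambda>y. K y = v \<and> B y) X else 0) =
        measure_pmf.expectation p (\<lambda>x. if K x = v then (if Q (K x) \<and> B x then X x else 0) else 0)"
      by (simp add: prob_mult_cexp)
  qed
  also have "\<dots> = measure_pmf.expectation p (\<lambda>x. if Q (K x) \<and> B x then X x else 0)"
    by (rule expectation_eq_sum_fibres[OF S, symmetric])
  finally show ?thesis .
qed

lemma expectation_cexp_tower:
  fixes X :: "'x \<Rightarrow> real"
  assumes "finite S" "set_pmf p \<subseteq> S"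
  shows "measure_pmf.expectation p (\<lambda>x. if Q (K x) then cexp p (\<lambda>y. K y = K x) X else 0) =
    measure_pmf.expectation p (\<lambda>x. if Q (K x) then X x else 0)"
  using expectation_cexp_fibres[OF assms, where B = "\<lambda>_. True" and c = 1 and Q = Q and K = K and X = X]
  by (simp only: simp_thms mult_1_left)

lemma sum_centered_weighted_affine:
  fixes c q :: "'b \<Rightarrow> real"
  assumes "(\<Sum>b\<in>A. c b) = 1"
  defines "m \<equiv> \<Sum>b\<in>A. c b * q b"
  shows "(\<Sum>b\<in>A. (q b - m) * (c b * x + y * c b * q b)) = y * (\<Sum>b\<in>A. c b * (q b - m)\<^sup>2)"
proof -
  have centered: "(\<Sum>b\<in>A. c b * (q b - m)) = 0"
    using assms by (simp add: right_diff_distrib sum_subtractf flip: sum_distrib_right)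
  have "(\<Sum>b\<in>A. (q b - m) * (c b * x + y * c b * q b)) =
      x * (\<Sum>b\<in>A. c b * (q b - m)) + y * (\<Sum>b\<in>A. c b * (q b - m)\<^sup>2) + y * m * (\<Sum>b\<in>A. c b * (q b - m))"
    by (simp add: sum_distrib_left sum.distrib[symmetric] power2_eq_square algebra_simps)
  with centered show ?thesis
    by simp
qed

section \<open>The trajectory distribution and its derivative\<close>

definition joint_actions :: "('s, 'i, 'a, 'o) posg \<Rightarrow> ('i \<Rightarrow> 'a) set" where
  "joint_actions G = {a. \<forall>i. a i \<in> acts G i}"

definition trajectories :: "('s, 'i, 'a, 'o) posg \<Rightarrow> nat \<Rightarrow> ('s \<times> ('i \<Rightarrow> 'a)) list set" where
  "trajectories G n = {tr. length tr = n \<and> (\<forall>x\<in>set tr. snd x \<in> joint_actions G)}"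

lemma valid_policyD: "valid_policy G \<pi> \<Longrightarrow> set_pmf (\<pi> i h) \<subseteq> acts G i"
  unfolding valid_policy_def by (metis prod.collapse)

lemma set_pmf_Pi_policy:
  fixes G :: "('s, 'i::finite, 'a, 'o) posg"
  assumes "valid_policy G \<pi>"
  shows "set_pmf (Pi_pmf UNIV undefined (\<lambda>i. \<pi> i (H i))) \<subseteq> joint_actions G"
proof
  fix a assume "a \<in> set_pmf (Pi_pmf UNIV undefined (\<lambda>i. \<pi> i (H i)))"
  then have "a i \<in> set_pmf (\<pi> i (H i))" for i
    using set_Pi_pmf_subset'[of UNIV undefined "\<lambda>i. \<pi> i (H i)"] by (auto simp: PiE_dflt_def)
  then have "a i \<in> acts G i" for i
    using valid_policyD[OF assms, of i "H i"] by blast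
  then show "a \<in> joint_actions G"
    by (simp add: joint_actions_def)
qed

lemma set_pmf_gen:
  fixes G :: "('s, 'i::finite, 'a, 'o) posg"
  assumes "valid_policy G \<pi>"
  shows "set_pmf (gen G \<pi> n past s) \<subseteq> trajectories G n"
proof (induction n arbitrary: past s)
  case 0
  then show ?case by (simp add: trajectories_def)
next
  case (Suc n)
  then show ?case
    using set_pmf_Pi_policy[OF assms, of "\<lambda>i. hist G i past s"]
    by (fastforce simp: trajectories_def)
qed

lemma set_pmf_traj:
  fixes G :: "('s, 'i::finite, 'a, 'o) posg"
  assumes "valid_policy G \<pi>"
  shows "set_pmf (traj G \<pi>) \<subseteq> trajectories G (horizon G)"
  using set_pmf_gen[OF assms] by (auto simp: traj_def)

lemma pmf_map_Cons: "pmf (map_pmf ((#) y) p) (x # xs) = (if x = y then pmf p xs else 0)"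
proof (cases "x = y")
  case True
  have "inj ((#) y)" by (simp add: inj_def)
  with True show ?thesis using pmf_map_inj'[of "(#) y" p xs] by simp
qed (subst pmf_map_outside, auto)

lemma pmf_gen_Suc_Nil: "pmf (gen G \<pi> (Suc n) past s) [] = 0"
  by (simp add: pmf_bind pmf_map_outside image_iff)

lemma pmf_gen_Suc_Cons:
  fixes G :: "('s::finite, 'i::finite, 'a, 'o) posg"
  shows "pmf (gen G \<pi> (Suc n) past s) ((s0, a) # tr) =
    (if s0 = s then (\<Prod>i\<in>UNIV. pmf (\<pi> i (hist G i past s)) (a i)) *
       (\<Sum>s'\<in>UNIV. pmf (trans G s a) s' * pmf (gen G \<pi> n (past @ [(s, a)]) s') tr) else 0)"
proof -
  let ?A = "Pi_pmf UNIV undefined (\<lambda>i. \<pi> i (hist G i past s))"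
  let ?f = "\<lambda>a'. measure_pmf.expectation (trans G s a')
    (\<lambda>s'. pmf (map_pmf ((#) (s, a')) (gen G \<pi> n (past @ [(s, a')]) s')) ((s0, a) # tr))"
  have "pmf (gen G \<pi> (Suc n) past s) ((s0, a) # tr) = measure_pmf.expectation ?A ?f"
    by (simp add: pmf_bind)
  also have "\<dots> = ?f a * pmf ?A a"
  proof (subst integral_measure_pmf_real[where A = "{a}"])
    show "a' \<in> {a}" if "?f a' \<noteq> 0" for a'
      using that by (cases "a' = a") (auto simp: pmf_map_Cons)
  qed simp_all
  also have "?f a = (if s0 = s then (\<Sum>s'\<in>UNIV. pmf (trans G s a) s' * pmf (gen G \<pi> n (past @ [(s, a)]) s') tr) else 0)"
    by (subst integral_measure_pmf_real[where A = UNIV]) (auto simp: pmf_map_Cons mult.commute)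
  also have "pmf ?A a = (\<Prod>i\<in>UNIV. pmf (\<pi> i (hist G i past s)) (a i))"
    by (rule pmf_Pi') auto
  finally show ?thesis by simp
qed

lemma pmf_traj:
  fixes G :: "('s::finite, 'i::finite, 'a, 'o) posg"
  shows "pmf (traj G \<pi>) tr = (\<Sum>s\<in>UNIV. pmf (init G) s * pmf (gen G \<pi> (horizon G) [] s) tr)"
  unfolding traj_def pmf_bind
  by (subst integral_measure_pmf_real[where A = UNIV]) (auto simp: mult.commute)

lemma has_real_derivative_prod_scaled:
  assumes "finite A"
    and "\<And>i. i \<in> A \<Longrightarrow> ((\<lambda>\<eta>. \<rho> i \<eta>) has_real_derivative d i) (at 0)"
    and "\<And>i. i \<in> A \<Longrightarrow> \<rho> i 0 = 1"
  shows "((\<lambda>\<eta>. \<Prod>i\<in>A. c i * \<rho> i \<eta>) has_real_derivative (\<Prod>i\<in>A. c i) * (\<Sum>i\<in>A. d i)) (at 0)"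
proof -
  have "((\<lambda>\<eta>. \<Prod>i\<in>A. c i * \<rho> i \<eta>) has_real_derivative
      (\<Sum>i\<in>A. c i * d i * (\<Prod>j\<in>A - {i}. c j * \<rho> j 0))) (at 0)"
    using assms(2) by (intro has_field_derivative_prod DERIV_cmult)
  moreover have "c i * d i * (\<Prod>j\<in>A - {i}. c j * \<rho> j 0) = d i * (\<Prod>j\<in>A. c j)" if "i \<in> A" for i
    using that assms(1,3) by (simp add: prod.remove[of A i c])
  ultimately show ?thesis
    by (simp add: sum_distrib_right mult.commute)
qed

lemma pmf_gen_has_real_derivative:
  fixes G :: "('s::finite, 'i::finite, 'a, 'o) posg"
    and \<sigma> :: "real \<Rightarrow> ('i, 'o, 'a) policy"
  assumes pmf_\<sigma>: "\<And>\<eta> i h a. pmf (\<sigma> \<eta> i h) a = pmf (\<pi> i h) a * \<rho> \<eta> i h a"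
    and \<rho>_0: "\<And>i h a. \<rho> 0 i h a = 1"
    and \<rho>_deriv: "\<And>i h a. ((\<lambda>\<eta>. \<rho> \<eta> i h a) has_real_derivative d i h a) (at 0)"
  shows "((\<lambda>\<eta>. pmf (gen G (\<sigma> \<eta>) n past s) tr) has_real_derivative
    pmf (gen G \<pi> n past s) tr *
      (\<Sum>k<n. \<Sum>i\<in>UNIV. d i (hist G i (past @ take k tr) (fst (tr ! k))) (snd (tr ! k) i))) (at 0)"
proof (induction n arbitrary: past s tr)
  case 0
  then show ?case by simp
next
  case (Suc n)
  show ?case
  proof (cases tr)
    case Nil
    then show ?thesis by (simp del: gen.simps add: pmf_gen_Suc_Nil)
  next
    case (Cons x tr')
    obtain s0 a where x: "x = (s0, a)" by (cases x)
    show ?thesis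
    proof (cases "s0 = s")
      case False
      with Cons x show ?thesis by (simp del: gen.simps add: pmf_gen_Suc_Cons)
    next
      case True
      have \<sigma>_0: "\<sigma> 0 = \<pi>"
        using pmf_\<sigma> \<rho>_0 by (intro ext pmf_eqI) simp
      define h where "h i = hist G i past s" for i
      define c where "c i = pmf (\<pi> i (h i)) (a i)" for i
      define past' where "past' = past @ [(s, a)]"
      define g where "g \<eta> s' = pmf (gen G (\<sigma> \<eta>) n past' s') tr'" for \<eta> s'
      define score' where
        "score' = (\<Sum>k<n. \<Sum>i\<in>UNIV. d i (hist G i (past' @ take k tr') (fst (tr' ! k))) (snd (tr' ! k) i))"
      have pmf_eq: "pmf (gen G (\<sigma> \<eta>) (Suc n) past s) tr =
          (\<Prod>i\<in>UNIV. c i * \<rho> \<eta> i (h i) (a i)) * (\<Sum>s'\<in>UNIV. pmf (trans G s a) s' * g \<eta> s')" for \<eta>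
        using Cons x True
        by (simp del: gen.simps add: pmf_gen_Suc_Cons pmf_\<sigma> c_def h_def g_def past'_def)
      have "((\<lambda>\<eta>. \<Prod>i\<in>UNIV. c i * \<rho> \<eta> i (h i) (a i)) has_real_derivative
          (\<Prod>i\<in>UNIV. c i) * (\<Sum>i\<in>UNIV. d i (h i) (a i))) (at 0)"
        by (rule has_real_derivative_prod_scaled) (simp_all add: \<rho>_deriv \<rho>_0)
      moreover have "((\<lambda>\<eta>. \<Sum>s'\<in>UNIV. pmf (trans G s a) s' * g \<eta> s') has_real_derivative
          (\<Sum>s'\<in>UNIV. pmf (trans G s a) s' * g 0 s') * score') (at 0)"
        unfolding sum_distrib_right mult.assoc g_def score'_def \<sigma>_0
        by (intro DERIV_sum DERIV_cmult Suc.IH)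
      ultimately have "((\<lambda>\<eta>. pmf (gen G (\<sigma> \<eta>) (Suc n) past s) tr) has_real_derivative
          (\<Prod>i\<in>UNIV. c i) * (\<Sum>i\<in>UNIV. d i (h i) (a i)) * (\<Sum>s'\<in>UNIV. pmf (trans G s a) s' * g 0 s') +
          (\<Sum>s'\<in>UNIV. pmf (trans G s a) s' * g 0 s') * score' * (\<Prod>i\<in>UNIV. c i)) (at 0)"
        unfolding pmf_eq by (rule DERIV_mult[THEN DERIV_cong]) (simp add: \<rho>_0)
      moreover have "pmf (gen G \<pi> (Suc n) past s) tr = (\<Prod>i\<in>UNIV. c i) * (\<Sum>s'\<in>UNIV. pmf (trans G s a) s' * g 0 s')"
        using pmf_eq[of 0] by (simp add: \<sigma>_0 \<rho>_0)
      moreover have "(\<Sum>k<Suc n. \<Sum>i\<in>UNIV. d i (hist G i (past @ take k tr) (fst (tr ! k))) (snd (tr ! k) i)) =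
          (\<Sum>i\<in>UNIV. d i (h i) (a i)) + score'"
        using Cons x True unfolding sum.lessThan_Suc_shift by (simp add: h_def score'_def past'_def)
      ultimately show ?thesis
        by (simp add: algebra_simps)
    qed
  qed
qed

locale finite_posg =
  fixes G :: "('s::finite, 'i::finite, 'a, 'o::finite) posg"
  assumes wf: "wf_posg G"
begin

lemma finite_acts: "finite (acts G i)"
  using wf by (simp add: wf_posg_def)

lemma finite_joint_actions: "finite (joint_actions G)"
proof -
  have "joint_actions G = Pi\<^sub>E UNIV (acts G)"
    by (auto simp: joint_actions_def PiE_def extensional_def Pi_def)
  then show ?thesis
    by (simp add: finite_acts finite_PiE)
qed

lemma finite_trajectories: "finite (trajectories G n)"
proof -
  have "trajectories G n \<subseteq> {tr. set tr \<subseteq> UNIV \<times> joint_actions G \<and> length tr = n}"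
    by (auto simp: trajectories_def)
  moreover have "finite ((UNIV :: 's set) \<times> joint_actions G)"
    using finite_joint_actions by simp
  ultimately show ?thesis
    using finite_lists_length_eq finite_subset by blast
qed

lemma integrable_traj:
  "valid_policy G \<pi> \<Longrightarrow> integrable (measure_pmf (traj G \<pi>)) (f :: _ \<Rightarrow> real)"
  using finite_trajectories set_pmf_traj
  by (intro integrable_measure_pmf_finite) (rule finite_subset)

lemma J_has_real_derivative:
  assumes valid_\<sigma>: "\<And>\<eta>. valid_policy G (\<sigma> \<eta>)"
    and pmf_\<sigma>: "\<And>\<eta> i h a. pmf (\<sigma> \<eta> i h) a = pmf (\<pi> i h) a * \<rho> \<eta> i h a"
    and \<rho>_0: "\<And>i h a. \<rho> 0 i h a = 1"
    and \<rho>_deriv: "\<And>i h a. ((\<lambda>\<eta>. \<rho> \<eta> i h a) has_real_derivative d i h a) (at 0)"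
  shows "((\<lambda>\<eta>. J G k (\<sigma> \<eta>)) has_real_derivative measure_pmf.expectation (traj G \<pi>)
    (\<lambda>tr. ret G k tr * (\<Sum>t<horizon G. \<Sum>i\<in>UNIV. d i (Hi G i t tr) (snd (tr ! t) i)))) (at 0)"
proof -
  let ?Tr = "trajectories G (horizon G)"
  define score where "score tr = (\<Sum>t<horizon G. \<Sum>i\<in>UNIV. d i (Hi G i t tr) (snd (tr ! t) i))" for tr
  have "\<sigma> 0 = \<pi>"
    using pmf_\<sigma> \<rho>_0 by (intro ext pmf_eqI) simp
  then have valid_\<pi>: "valid_policy G \<pi>"
    using valid_\<sigma> by metis
  have J_\<sigma>: "J G k (\<sigma> \<eta>) =
      (\<Sum>tr\<in>?Tr. ret G k tr * (\<Sum>s\<in>UNIV. pmf (init G) s * pmf (gen G (\<sigma> \<eta>) (horizon G) [] s) tr))" for \<eta>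
    unfolding J_def
    by (simp add: expectation_eq_sum_pmf[OF finite_trajectories set_pmf_traj[OF valid_\<sigma>]] pmf_traj mult.commute)
  have "((\<lambda>\<eta>. J G k (\<sigma> \<eta>)) has_real_derivative (\<Sum>tr\<in>?Tr. ret G k tr *
      (\<Sum>s\<in>UNIV. pmf (init G) s * (pmf (gen G \<pi> (horizon G) [] s) tr * score tr)))) (at 0)"
    unfolding J_\<sigma>
    using pmf_gen_has_real_derivative[OF pmf_\<sigma> \<rho>_0 \<rho>_deriv, where past = "[]"]
    by (intro DERIV_sum DERIV_cmult) (simp add: score_def Hi_def)
  also have "(\<Sum>tr\<in>?Tr. ret G k tr *
      (\<Sum>s\<in>UNIV. pmf (init G) s * (pmf (gen G \<pi> (horizon G) [] s) tr * score tr))) =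
      measure_pmf.expectation (traj G \<pi>) (\<lambda>tr. ret G k tr * score tr)"
    by (simp only: expectation_eq_sum_pmf[OF finite_trajectories set_pmf_traj[OF valid_\<pi>]]
        pmf_traj sum_distrib_left sum_distrib_right mult_ac)
  finally show ?thesis
    by (simp add: score_def)
qed

text \<open>In a common-payoff game the gradient splits into the players' own contributions: the part
  of the derivative due to player \<open>j\<close> is the derivative of \<open>J G k\<close> along the path that only
  moves player \<open>j\<close>, and along that path \<open>J G k\<close> and \<open>J G j\<close> coincide.\<close>
lemma common_payoff_J_has_real_derivative:
  assumes common: "common_payoff G"
    and valid_\<sigma>: "\<And>\<eta>. valid_policy G (\<sigma> \<eta>)"
    and pmf_\<sigma>: "\<And>\<eta> i h a. pmf (\<sigma> \<eta> i h) a = pmf (\<pi> i h) a * \<rho> \<eta> i h a"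
    and \<rho>_0: "\<And>i h a. \<rho> 0 i h a = 1"
    and \<rho>_deriv: "\<And>i h a. ((\<lambda>\<eta>. \<rho> \<eta> i h a) has_real_derivative d i h a) (at 0)"
  shows "((\<lambda>\<eta>. J G k (\<sigma> \<eta>)) has_real_derivative (\<Sum>j\<in>UNIV. measure_pmf.expectation (traj G \<pi>)
    (\<lambda>tr. ret G j tr * (\<Sum>t<horizon G. d j (Hi G j t tr) (snd (tr ! t) j))))) (at 0)"
proof -
  define grad where "grad k j = measure_pmf.expectation (traj G \<pi>)
    (\<lambda>tr. ret G k tr * (\<Sum>t<horizon G. d j (Hi G j t tr) (snd (tr ! t) j)))" for k j
  have "\<sigma> 0 = \<pi>"
    using pmf_\<sigma> \<rho>_0 by (intro ext pmf_eqI) simp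
  then have valid_\<pi>: "valid_policy G \<pi>"
    using valid_\<sigma> by metis
  have "measure_pmf.expectation (traj G \<pi>)
      (\<lambda>tr. ret G k tr * (\<Sum>t<horizon G. \<Sum>j\<in>UNIV. d j (Hi G j t tr) (snd (tr ! t) j))) = (\<Sum>j\<in>UNIV. grad k j)"
    unfolding grad_def sum.swap[of _ "{..<horizon G}"] sum_distrib_left
    by (simp add: integral_sum integrable_traj[OF valid_\<pi>]) (rule sum.swap)
  moreover have "grad k j = grad j j" for j
  proof -
    define \<sigma>j where "\<sigma>j \<eta> i = (if i = j then \<sigma> \<eta> i else \<pi> i)" for \<eta> i
    have valid_\<sigma>j: "valid_policy G (\<sigma>j \<eta>)" for \<eta>
      using valid_\<sigma>[of \<eta>] valid_\<pi> by (simp add: \<sigma>j_def valid_policy_def)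
    have "((\<lambda>\<eta>. J G k' (\<sigma>j \<eta>)) has_real_derivative grad k' j) (at 0)" for k'
      using J_has_real_derivative[OF valid_\<sigma>j,
          where \<rho> = "\<lambda>\<eta> i h a. if i = j then \<rho> \<eta> i h a else 1"
            and d = "\<lambda>i h a. if i = j then d i h a else 0"]
      by (simp add: grad_def \<sigma>j_def pmf_\<sigma> \<rho>_0 \<rho>_deriv if_distrib)
    moreover have "(\<lambda>\<eta>. J G k (\<sigma>j \<eta>)) = (\<lambda>\<eta>. J G j (\<sigma>j \<eta>))"
      using common valid_\<sigma>j unfolding common_payoff_def by blast
    ultimately show ?thesis
      using DERIV_unique by metis
  qed
  ultimately show ?thesis
    using J_has_real_derivative[OF valid_\<sigma> pmf_\<sigma> \<rho>_0 \<rho>_deriv, of k] by (simp add: grad_def)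
qed

end

definition obs_along ::
    "('s, 'i, 'a, 'o) posg \<Rightarrow> 'i \<Rightarrow> ('s \<times> ('i \<Rightarrow> 'a)) list \<Rightarrow> nat \<Rightarrow> 'o" where
  "obs_along G i tr k =
    (if k = 0 then obs0 G i (fst (tr ! 0)) else obs G i (fst (tr ! k)) (snd (tr ! (k - 1))))"

lemma Hi_eq_obs_along:
  assumes "t \<le> length tr"
  shows "Hi G i t tr =
    (zip (map (obs_along G i tr) [0..<t]) (map (\<lambda>k. snd (tr ! k) i) [0..<t]), obs_along G i tr t)"
proof -
  have obs_at_eq: "obs_at G i (map fst (take t tr) @ [fst (tr ! t)]) (map snd (take t tr)) k = obs_along G i tr k"
    if "k \<le> t" for k
    using that assms by (cases "k < t") (auto simp: obs_at_def obs_along_def nth_append)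
  have obs: "map (obs_at G i (map fst (take t tr) @ [fst (tr ! t)]) (map snd (take t tr))) [0..<t] =
      map (obs_along G i tr) [0..<t]"
    by (intro map_cong) (simp_all add: obs_at_eq)
  have acts: "map (\<lambda>a. a i) (map snd (take t tr)) = map (\<lambda>k. snd (tr ! k) i) [0..<t]"
    using assms by (intro nth_equalityI) auto
  have len: "length (take t tr) = t"
    using assms by simp
  show ?thesis
    unfolding Hi_def hist_def Let_def len obs acts using obs_at_eq by simp
qed

lemma length_Hi: "t \<le> length tr \<Longrightarrow> length (fst (Hi G i t tr)) = t"
  by (simp add: Hi_eq_obs_along)

lemma Hi_Suc:
  "Suc t \<le> length tr \<Longrightarrow>
    Hi G i (Suc t) tr = (fst (Hi G i t tr) @ [(snd (Hi G i t tr), snd (tr ! t) i)], obs_along G i tr (Suc t))"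
  by (simp add: Hi_eq_obs_along zip_append)

lemma fst_Hi_Suc_eq_iff:
  assumes "Suc t \<le> length tr"
  shows "fst (Hi G i (Suc t) tr) = fst h @ [(snd h, b)] \<longleftrightarrow> Hi G i t tr = h \<and> snd (tr ! t) i = b"
  using Hi_Suc[OF assms, of G i] by (auto simp: prod_eq_iff)

lemma Gge_Suc: "t < length tr \<Longrightarrow> Gge G i t tr = rew G i (fst (tr ! t)) (snd (tr ! t)) + Gge G i (Suc t) tr"
  by (simp add: Gge_def sum.atLeast_Suc_lessThan)

lemma ret_eq_past_plus_Gge:
  assumes "t \<le> length tr"
  shows "ret G i tr = (\<Sum>k<t. rew G i (fst (tr ! k)) (snd (tr ! k))) + Gge G i t tr"
proof -
  have "ret G i tr = (\<Sum>k<length tr. rew G i (fst (tr ! k)) (snd (tr ! k)))"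
    by (simp add: ret_def sum_list_sum_nth atLeast0LessThan case_prod_beta)
  also have "\<dots> = (\<Sum>k<t. rew G i (fst (tr ! k)) (snd (tr ! k))) + Gge G i t tr"
    using sum.atLeastLessThan_concat[of 0 t "length tr" "\<lambda>k. rew G i (fst (tr ! k)) (snd (tr ! k))"] assms
    by (simp add: Gge_def atLeast0LessThan)
  finally show ?thesis .
qed

lemma set_map_snd_Hi:
  assumes "tr \<in> trajectories G n" "t \<le> n"
  shows "set (map snd (fst (Hi G i t tr))) \<subseteq> acts G i"
proof
  fix a assume "a \<in> set (map snd (fst (Hi G i t tr)))"
  moreover have "length tr = n"
    using assms(1) by (simp add: trajectories_def)
  ultimately obtain k where "k < t" "a = snd (tr ! k) i"
    using assms(2) by (auto simp: Hi_eq_obs_along)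
  moreover have "tr ! k \<in> set tr"
    using \<open>k < t\<close> \<open>length tr = n\<close> assms(2) by simp
  ultimately show "a \<in> acts G i"
    using assms(1) by (auto simp: trajectories_def joint_actions_def)
qed

section \<open>Action values as expected returns\<close>

locale posg_policy = finite_posg G for G :: "('s::finite, 'i::finite, 'a, 'o::finite) posg" +
  fixes \<pi> :: "('i, 'o, 'a) policy"
  assumes valid: "valid_policy G \<pi>"
begin

lemma expectation_traj_add:
  "measure_pmf.expectation (traj G \<pi>) (\<lambda>tr. f tr + g tr) =
    measure_pmf.expectation (traj G \<pi>) f + measure_pmf.expectation (traj G \<pi>) (g :: _ \<Rightarrow> real)"
  by (intro Bochner_Integration.integral_add integrable_traj[OF valid])

lemma length_traj: "tr \<in> set_pmf (traj G \<pi>) \<Longrightarrow> length tr = horizon G"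
  using set_pmf_traj[OF valid] by (auto simp: trajectories_def)

lemma traj_action_in_acts:
  assumes "tr \<in> set_pmf (traj G \<pi>)" "t < horizon G"
  shows "snd (tr ! t) i \<in> acts G i"
proof -
  have "tr \<in> trajectories G (horizon G)"
    using assms(1) set_pmf_traj[OF valid] by auto
  moreover from this have "tr ! t \<in> set tr"
    using assms(2) by (simp add: trajectories_def)
  ultimately show ?thesis
    by (auto simp: trajectories_def joint_actions_def)
qed

lemma finite_set_pmf_gen: "finite (set_pmf (gen G \<pi> n past s))"
  using finite_trajectories set_pmf_gen[OF valid] by (rule finite_subset[rotated])

lemma expectation_gen_Suc:
  fixes f :: "('s \<times> ('i \<Rightarrow> 'a)) list \<Rightarrow> real"
  shows "measure_pmf.expectation (gen G \<pi> (Suc n) past s) f =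
    measure_pmf.expectation (Pi_pmf UNIV undefined (\<lambda>i. \<pi> i (hist G i past s)))
      (\<lambda>a. measure_pmf.expectation (trans G s a)
        (\<lambda>s'. measure_pmf.expectation (gen G \<pi> n (past @ [(s, a)]) s') (\<lambda>r. f ((s, a) # r))))"
proof -
  have step: "measure_pmf.expectation (trans G s a \<bind> (\<lambda>s'. map_pmf ((#) (s, a)) (gen G \<pi> n (past @ [(s, a)]) s'))) f =
      measure_pmf.expectation (trans G s a)
        (\<lambda>s'. measure_pmf.expectation (gen G \<pi> n (past @ [(s, a)]) s') (\<lambda>r. f ((s, a) # r)))" for a
    by (subst expectation_bind_pmf[where A = UNIV]) (simp_all add: finite_set_pmf_gen)
  show ?thesis
    unfolding gen.simps step[symmetric]
    by (rule expectation_bind_pmf[OF finite_joint_actions set_pmf_Pi_policy[OF valid]])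
      (auto simp: finite_set_pmf_gen)
qed

lemma expectation_traj:
  fixes f :: "('s \<times> ('i \<Rightarrow> 'a)) list \<Rightarrow> real"
  shows "measure_pmf.expectation (traj G \<pi>) f =
    measure_pmf.expectation (init G) (\<lambda>s. measure_pmf.expectation (gen G \<pi> (horizon G) [] s) f)"
  unfolding traj_def
  by (rule expectation_bind_pmf[where A = UNIV]) (simp_all add: finite_set_pmf_gen)

lemma expectation_gen_action_indicator:
  fixes \<phi> :: "('s \<times> ('i \<Rightarrow> 'a)) list \<Rightarrow> 's \<Rightarrow> real"
  assumes "k < n"
  shows "measure_pmf.expectation (gen G \<pi> n past s)
      (\<lambda>r. if snd (r ! k) i = b then \<phi> (take k r) (fst (r ! k)) else 0) =
    measure_pmf.expectation (gen G \<pi> n past s)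
      (\<lambda>r. pmf (\<pi> i (hist G i (past @ take k r) (fst (r ! k)))) b * \<phi> (take k r) (fst (r ! k)))"
  using assms
proof (induction k arbitrary: n past s \<phi>)
  case 0
  then obtain m where n: "n = Suc m"
    by (cases n) auto
  let ?A = "Pi_pmf UNIV undefined (\<lambda>j. \<pi> j (hist G j past s))"
  have "measure_pmf.expectation ?A (\<lambda>a. if a i = b then 1 else 0 :: real) =
      measure_pmf.expectation (map_pmf (\<lambda>a. a i) ?A) (\<lambda>x. if x = b then 1 else 0)"
    by simp
  also have "\<dots> = pmf (\<pi> i (hist G i past s)) b"
    by (simp add: Pi_pmf_component measure_pmf_single flip: prob_eq_expectation_indicator)
  finally have "measure_pmf.expectation ?A (\<lambda>a. (if a i = b then 1 else 0) * \<phi> [] s) =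
      pmf (\<pi> i (hist G i past s)) b * \<phi> [] s"
    by simp
  moreover have "(\<lambda>a. (if a i = b then 1 else 0) * \<phi> [] s) = (\<lambda>a. if a i = b then \<phi> [] s else 0)"
    by auto
  ultimately show ?case
    unfolding n expectation_gen_Suc by (simp cong: if_cong)
next
  case (Suc k)
  then obtain m where n: "n = Suc m" and "k < m"
    by (cases n) auto
  have "measure_pmf.expectation (gen G \<pi> m (past @ [(s, a)]) s')
      (\<lambda>r. if snd (r ! k) i = b then \<phi> ((s, a) # take k r) (fst (r ! k)) else 0) =
    measure_pmf.expectation (gen G \<pi> m (past @ [(s, a)]) s')
      (\<lambda>r. pmf (\<pi> i (hist G i (past @ (s, a) # take k r) (fst (r ! k)))) b * \<phi> ((s, a) # take k r) (fst (r ! k)))"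
    for a s'
    using Suc.IH[OF \<open>k < m\<close>, where past = "past @ [(s, a)]" and s = s' and \<phi> = "\<lambda>l. \<phi> ((s, a) # l)"]
    by simp
  then show ?case
    unfolding n expectation_gen_Suc by (simp cong: if_cong)
qed

lemma expectation_traj_action_indicator:
  fixes \<phi> :: "('s \<times> ('i \<Rightarrow> 'a)) list \<Rightarrow> 's \<Rightarrow> real"
  assumes "t < horizon G"
  shows "measure_pmf.expectation (traj G \<pi>) (\<lambda>tr. if snd (tr ! t) i = b then \<phi> (take t tr) (fst (tr ! t)) else 0) =
    measure_pmf.expectation (traj G \<pi>) (\<lambda>tr. pmf (\<pi> i (Hi G i t tr)) b * \<phi> (take t tr) (fst (tr ! t)))"
  unfolding expectation_traj Hi_def
  using expectation_gen_action_indicator[OF assms, where past = "[]"] by simp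

lemma prob_Hj_and_action:
  assumes "t < horizon G" "v i = h"
  shows "measure_pmf.prob (traj G \<pi>) {tr. Hj G t tr = v \<and> snd (tr ! t) i = b} =
    pmf (\<pi> i h) b * measure_pmf.prob (traj G \<pi>) {tr. Hj G t tr = v}"
proof -
  let ?E = "\<lambda>past s. if (\<lambda>j. hist G j past s) = v then 1 else 0 :: real"
  have "measure_pmf.prob (traj G \<pi>) {tr. Hj G t tr = v \<and> snd (tr ! t) i = b} =
      measure_pmf.expectation (traj G \<pi>) (\<lambda>tr. if snd (tr ! t) i = b then ?E (take t tr) (fst (tr ! t)) else 0)"
    unfolding prob_eq_expectation_indicator Hj_def Hi_def
    by (intro Bochner_Integration.integral_cong) auto
  also have "\<dots> = measure_pmf.expectation (traj G \<pi>) (\<lambda>tr. pmf (\<pi> i (Hi G i t tr)) b * ?E (take t tr) (fst (tr ! t)))"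
    by (rule expectation_traj_action_indicator[OF assms(1)])
  also have "\<dots> = measure_pmf.expectation (traj G \<pi>) (\<lambda>tr. pmf (\<pi> i h) b * (if Hj G t tr = v then 1 else 0))"
    using assms(2) by (intro Bochner_Integration.integral_cong) (auto simp: Hj_def Hi_def)
  also have "\<dots> = pmf (\<pi> i h) b * measure_pmf.prob (traj G \<pi>) {tr. Hj G t tr = v}"
    by (simp add: prob_eq_expectation_indicator)
  finally show ?thesis .
qed

lemma expectation_vval_Suc:
  assumes "t < horizon G"
  shows "measure_pmf.expectation (traj G \<pi>)
      (\<lambda>tr. if Hi G i t tr = h \<and> snd (tr ! t) i = b then vval G i \<pi> (Suc t) (Hj G (Suc t) tr) else 0) =
    measure_pmf.expectation (traj G \<pi>)
      (\<lambda>tr. if Hi G i t tr = h \<and> snd (tr ! t) i = b then Gge G i (Suc t) tr else 0)"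
proof -
  have event: "Hi G i t tr = h \<and> snd (tr ! t) i = b \<longleftrightarrow> fst (Hj G (Suc t) tr i) = fst h @ [(snd h, b)]"
    if "tr \<in> set_pmf (traj G \<pi>)" for tr
    using fst_Hi_Suc_eq_iff[of t tr G i h b] length_traj[OF that] assms by (simp add: Hj_def)
  show ?thesis
    using expectation_cexp_tower[OF finite_trajectories set_pmf_traj[OF valid], where K = "Hj G (Suc t)"
        and Q = "\<lambda>v. fst (v i) = fst h @ [(snd h, b)]" and X = "Gge G i (Suc t)"]
    by (simp add: vval_def event cong: expectation_cong_set_pmf if_cong)
qed

text \<open>Conditioning on the joint history at time \<open>t\<close> is harmless because player \<open>i\<close>'s action is
  independent of it given \<open>h\<close> (\<open>prob_Hj_and_action\<close>); then the tower property through the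
  joint history at time \<open>t + 1\<close> (\<open>expectation_vval_Suc\<close>) turns the value into the return-to-go.\<close>
lemma prob_mult_qdp:
  assumes t: "t = length (fst h)" "t < horizon G"
  shows "measure_pmf.prob (traj G \<pi>) {tr. Hi G i t tr = h} * pmf (\<pi> i h) b * qdp G i \<pi> h b =
    measure_pmf.expectation (traj G \<pi>) (\<lambda>tr. if Hi G i t tr = h \<and> snd (tr ! t) i = b then Gge G i t tr else 0)"
proof -
  let ?Tr = "trajectories G (horizon G)"
  let ?E = "\<lambda>tr. Hi G i t tr = h \<and> snd (tr ! t) i = b"
  have S: "finite ?Tr" "set_pmf (traj G \<pi>) \<subseteq> ?Tr"
    using finite_trajectories set_pmf_traj[OF valid] by auto
  define X where "X = (\<lambda>tr. rew G i (fst (tr ! t)) (snd (tr ! t)) + vval G i \<pi> (Suc t) (Hj G (Suc t) tr))"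
  have "measure_pmf.prob (traj G \<pi>) {tr. Hi G i t tr = h} * qdp G i \<pi> h b =
      measure_pmf.expectation (traj G \<pi>)
        (\<lambda>tr. if Hi G i t tr = h then cexp (traj G \<pi>) (\<lambda>y. Hj G t y = Hj G t tr \<and> snd (y ! t) i = b) X else 0)"
    unfolding qdp_def Let_def t(1)[symmetric] prob_mult_cexp
    by (simp add: qjoint_def X_def cong: if_cong)
  then have "measure_pmf.prob (traj G \<pi>) {tr. Hi G i t tr = h} * pmf (\<pi> i h) b * qdp G i \<pi> h b =
      measure_pmf.expectation (traj G \<pi>) (\<lambda>tr. if ?E tr then X tr else 0)"
    using expectation_cexp_fibres[OF S, where K = "Hj G t" and Q = "\<lambda>v. v i = h"
        and B = "\<lambda>tr. snd (tr ! t) i = b" and c = "pmf (\<pi> i h) b" and X = X]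
      prob_Hj_and_action[OF t(2)]
    by (simp add: Hj_def mult.commute mult.left_commute)
  also have "\<dots> = measure_pmf.expectation (traj G \<pi>) (\<lambda>tr. if ?E tr then rew G i (fst (tr ! t)) (snd (tr ! t)) else 0) +
      measure_pmf.expectation (traj G \<pi>) (\<lambda>tr. if ?E tr then vval G i \<pi> (Suc t) (Hj G (Suc t) tr) else 0)"
    unfolding expectation_traj_add[symmetric] X_def by (intro Bochner_Integration.integral_cong) auto
  also have "measure_pmf.expectation (traj G \<pi>) (\<lambda>tr. if ?E tr then vval G i \<pi> (Suc t) (Hj G (Suc t) tr) else 0) =
      measure_pmf.expectation (traj G \<pi>) (\<lambda>tr. if ?E tr then Gge G i (Suc t) tr else 0)"
    by (rule expectation_vval_Suc[OF t(2)])
  also have "measure_pmf.expectation (traj G \<pi>) (\<lambda>tr. if ?E tr then rew G i (fst (tr ! t)) (snd (tr ! t)) else 0) +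
      measure_pmf.expectation (traj G \<pi>) (\<lambda>tr. if ?E tr then Gge G i (Suc t) tr else 0) =
      measure_pmf.expectation (traj G \<pi>) (\<lambda>tr. if ?E tr then Gge G i t tr else 0)"
    unfolding expectation_traj_add[symmetric]
    by (intro expectation_cong_set_pmf) (auto simp: Gge_Suc length_traj t(2))
  finally show ?thesis .
qed

section \<open>Advantages and the policy gradient\<close>

definition q_mean :: "'i \<Rightarrow> ('o, 'a) dpoint \<Rightarrow> real" where
  "q_mean i h = (\<Sum>b\<in>acts G i. pmf (\<pi> i h) b * qdp G i \<pi> h b)"

definition advantage :: "'i \<Rightarrow> ('o, 'a) dpoint \<Rightarrow> 'a \<Rightarrow> real" where
  "advantage i h b = (if reached G \<pi> i h then qdp G i \<pi> h b - q_mean i h else 0)"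

definition q_variance :: "'i \<Rightarrow> ('o, 'a) dpoint \<Rightarrow> real" where
  "q_variance i h = (\<Sum>b\<in>acts G i. pmf (\<pi> i h) b * (qdp G i \<pi> h b - q_mean i h)\<^sup>2)"

lemma sum_pmf_acts: "(\<Sum>b\<in>acts G i. pmf (\<pi> i h) b) = 1"
  by (intro sum_pmf_eq_1 finite_acts valid_policyD[OF valid])

lemma pmf_outside_acts: "b \<notin> acts G i \<Longrightarrow> pmf (\<pi> i h) b = 0"
  using valid_policyD[OF valid, of i h] by (auto simp: set_pmf_eq)

lemma reachedE:
  assumes "reached G \<pi> i h"
  obtains tr where "tr \<in> set_pmf (traj G \<pi>)" "Hi G i (length (fst h)) tr = h"
proof -
  have "measure_pmf.prob (traj G \<pi>) {tr. Hi G i (length (fst h)) tr = h} \<noteq> 0"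
    using assms by (simp add: reached_def)
  then show ?thesis
    using that by (auto simp: measure_pmf_zero_iff)
qed

lemma reached_acts:
  assumes "reached G \<pi> i h"
  shows "set (map snd (fst h)) \<subseteq> acts G i"
proof -
  obtain tr where "tr \<in> set_pmf (traj G \<pi>)" "Hi G i (length (fst h)) tr = h"
    using reachedE[OF assms] .
  moreover have "length (fst h) < horizon G"
    using assms by (simp add: reached_def)
  ultimately show ?thesis
    using set_map_snd_Hi[of tr G "horizon G" "length (fst h)" i] set_pmf_traj[OF valid] by auto
qed

lemma expectation_ret_action:
  fixes i :: 'i
  assumes t: "t = length (fst h)" "t < horizon G"
  defines "x \<equiv> measure_pmf.expectation (traj G \<pi>)
    (\<lambda>tr. if Hi G i t tr = h then (\<Sum>k<t. rew G i (fst (tr ! k)) (snd (tr ! k))) else 0)"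
  shows "measure_pmf.expectation (traj G \<pi>) (\<lambda>tr. if Hi G i t tr = h \<and> snd (tr ! t) i = b then ret G i tr else 0) =
    pmf (\<pi> i h) b * x + measure_pmf.prob (traj G \<pi>) {tr. Hi G i t tr = h} * pmf (\<pi> i h) b * qdp G i \<pi> h b"
proof -
  define \<phi> where "\<phi> l s = (if hist G i l s = h then (\<Sum>k<t. rew G i (fst (l ! k)) (snd (l ! k))) else 0)" for l s
  have "measure_pmf.expectation (traj G \<pi>) (\<lambda>tr. if Hi G i t tr = h \<and> snd (tr ! t) i = b then ret G i tr else 0) =
      measure_pmf.expectation (traj G \<pi>) (\<lambda>tr. if snd (tr ! t) i = b then \<phi> (take t tr) (fst (tr ! t)) else 0) +
      measure_pmf.expectation (traj G \<pi>) (\<lambda>tr. if Hi G i t tr = h \<and> snd (tr ! t) i = b then Gge G i t tr else 0)"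
    unfolding expectation_traj_add[symmetric]
    using t(2) by (intro expectation_cong_set_pmf) (auto simp: \<phi>_def Hi_def ret_eq_past_plus_Gge[of t] length_traj)
  also have "measure_pmf.expectation (traj G \<pi>) (\<lambda>tr. if snd (tr ! t) i = b then \<phi> (take t tr) (fst (tr ! t)) else 0) =
      pmf (\<pi> i h) b * x"
    unfolding expectation_traj_action_indicator[OF t(2)] x_def
    by (simp flip: integral_mult_right_zero) (intro Bochner_Integration.integral_cong, auto simp: \<phi>_def Hi_def)
  finally show ?thesis
    using prob_mult_qdp[OF t] by simp
qed

lemma expectation_ret_advantage:
  assumes reached: "reached G \<pi> i h" and t: "t = length (fst h)"
  shows "measure_pmf.expectation (traj G \<pi>) (\<lambda>tr. if Hi G i t tr = h then ret G i tr * advantage i h (snd (tr ! t) i) else 0) =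
    measure_pmf.prob (traj G \<pi>) {tr. Hi G i t tr = h} * q_variance i h"
proof -
  have t_less: "t < horizon G"
    using reached t by (simp add: reached_def)
  let ?E = "\<lambda>b. measure_pmf.expectation (traj G \<pi>) (\<lambda>tr. if Hi G i t tr = h \<and> snd (tr ! t) i = b then ret G i tr else 0)"
  have "measure_pmf.expectation (traj G \<pi>) (\<lambda>tr. if Hi G i t tr = h then ret G i tr * advantage i h (snd (tr ! t) i) else 0) =
      measure_pmf.expectation (traj G \<pi>) (\<lambda>tr. \<Sum>b\<in>acts G i. advantage i h b *
        (if Hi G i t tr = h \<and> snd (tr ! t) i = b then ret G i tr else 0))"
    using traj_action_in_acts[OF _ t_less]
    by (intro expectation_cong_set_pmf) (auto simp: finite_acts if_distrib[of "times _"] sum.delta cong: if_cong)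
  also have "\<dots> = (\<Sum>b\<in>acts G i. advantage i h b * ?E b)"
    by (simp add: integral_sum integrable_traj[OF valid])
  also have "\<dots> = measure_pmf.prob (traj G \<pi>) {tr. Hi G i t tr = h} * q_variance i h"
    unfolding expectation_ret_action[OF t t_less] advantage_def q_variance_def q_mean_def
    using sum_centered_weighted_affine[OF sum_pmf_acts] reached by simp
  finally show ?thesis .
qed

lemma expectation_ret_advantage_at:
  assumes t_less: "t < horizon G"
  shows "measure_pmf.expectation (traj G \<pi>) (\<lambda>tr. ret G i tr * advantage i (Hi G i t tr) (snd (tr ! t) i)) =
    (\<Sum>h\<in>Hi G i t ` trajectories G (horizon G). measure_pmf.prob (traj G \<pi>) {tr. Hi G i t tr = h} * q_variance i h)"
proof -
  have "measure_pmf.expectation (traj G \<pi>) (\<lambda>tr. ret G i tr * advantage i (Hi G i t tr) (snd (tr ! t) i)) =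
      (\<Sum>h\<in>Hi G i t ` trajectories G (horizon G). measure_pmf.expectation (traj G \<pi>)
        (\<lambda>tr. if Hi G i t tr = h then ret G i tr * advantage i h (snd (tr ! t) i) else 0))"
    by (subst expectation_eq_sum_fibres[OF finite_trajectories set_pmf_traj[OF valid], where K = "Hi G i t"])
      (auto intro!: sum.cong Bochner_Integration.integral_cong)
  also have "\<dots> = (\<Sum>h\<in>Hi G i t ` trajectories G (horizon G).
      measure_pmf.prob (traj G \<pi>) {tr. Hi G i t tr = h} * q_variance i h)"
  proof (intro sum.cong refl)
    fix h assume "h \<in> Hi G i t ` trajectories G (horizon G)"
    then have t: "t = length (fst h)"
      using t_less by (auto simp: length_Hi trajectories_def)
    show "measure_pmf.expectation (traj G \<pi>)
        (\<lambda>tr. if Hi G i t tr = h then ret G i tr * advantage i h (snd (tr ! t) i) else 0) =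
      measure_pmf.prob (traj G \<pi>) {tr. Hi G i t tr = h} * q_variance i h"
    proof (cases "reached G \<pi> i h")
      case True
      then show ?thesis by (rule expectation_ret_advantage[OF _ t])
    next
      case False
      then have "measure_pmf.prob (traj G \<pi>) {tr. Hi G i t tr = h} = 0"
        using t t_less by (simp add: reached_def zero_less_measure_iff)
      with False show ?thesis
        by (simp add: advantage_def cong: if_cong)
    qed
  qed
  finally show ?thesis .
qed

lemma expectation_ret_sum_advantage:
  "measure_pmf.expectation (traj G \<pi>) (\<lambda>tr. ret G i tr * (\<Sum>t<horizon G. advantage i (Hi G i t tr) (snd (tr ! t) i))) =
    (\<Sum>t<horizon G. \<Sum>h\<in>Hi G i t ` trajectories G (horizon G).
      measure_pmf.prob (traj G \<pi>) {tr. Hi G i t tr = h} * q_variance i h)"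
  by (simp add: sum_distrib_left integral_sum integrable_traj[OF valid] expectation_ret_advantage_at)

lemma q_variance_nonneg: "0 \<le> q_variance i h"
  unfolding q_variance_def by (intro sum_nonneg) simp

lemma q_variance_pos:
  assumes "fully_mixed G \<pi>" "reached G \<pi> i h"
    and "b1 \<in> acts G i" "b2 \<in> acts G i" "qdp G i \<pi> h b1 \<noteq> qdp G i \<pi> h b2"
  shows "0 < q_variance i h"
proof (rule ccontr)
  assume "\<not> 0 < q_variance i h"
  then have "\<forall>b\<in>acts G i. pmf (\<pi> i h) b * (qdp G i \<pi> h b - q_mean i h)\<^sup>2 = 0"
    using q_variance_nonneg[of i h] by (simp add: q_variance_def sum_nonneg_eq_0_iff finite_acts)
  moreover have "0 < pmf (\<pi> i h) b" if "b \<in> acts G i" for b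
    using assms(1) reached_acts[OF assms(2)] that unfolding fully_mixed_def by blast
  ultimately have "qdp G i \<pi> h b = q_mean i h" if "b \<in> acts G i" for b
    using that by fastforce
  with assms(3-5) show False
    by simp
qed

lemma expectation_ret_sum_advantage_nonneg:
  "0 \<le> measure_pmf.expectation (traj G \<pi>) (\<lambda>tr. ret G i tr * (\<Sum>t<horizon G. advantage i (Hi G i t tr) (snd (tr ! t) i)))"
  unfolding expectation_ret_sum_advantage
  by (intro sum_nonneg mult_nonneg_nonneg measure_nonneg q_variance_nonneg)

lemma expectation_ret_sum_advantage_pos:
  assumes "fully_mixed G \<pi>" "reached G \<pi> i h"
    and "b1 \<in> acts G i" "b2 \<in> acts G i" "qdp G i \<pi> h b1 \<noteq> qdp G i \<pi> h b2"
  shows "0 < measure_pmf.expectation (traj G \<pi>) (\<lambda>tr. ret G i tr * (\<Sum>t<horizon G. advantage i (Hi G i t tr) (snd (tr ! t) i)))"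
proof -
  let ?t = "length (fst h)" and ?Tr = "trajectories G (horizon G)"
  obtain tr where "tr \<in> set_pmf (traj G \<pi>)" "Hi G i ?t tr = h"
    using reachedE[OF assms(2)] .
  then have h: "h \<in> Hi G i ?t ` ?Tr"
    using set_pmf_traj[OF valid] by force
  have "0 < measure_pmf.prob (traj G \<pi>) {tr. Hi G i ?t tr = h} * q_variance i h"
    using assms(2) q_variance_pos[OF assms] by (simp add: reached_def)
  then have "0 < (\<Sum>h'\<in>Hi G i ?t ` ?Tr. measure_pmf.prob (traj G \<pi>) {tr. Hi G i ?t tr = h'} * q_variance i h')"
    using h finite_trajectories by (intro sum_pos2[where i = h]) (auto intro: mult_nonneg_nonneg q_variance_nonneg)
  moreover have "?t < horizon G"
    using assms(2) by (simp add: reached_def)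
  ultimately show ?thesis
    unfolding expectation_ret_sum_advantage
    by (intro sum_pos2[where i = ?t]) (auto intro!: sum_nonneg mult_nonneg_nonneg q_variance_nonneg)
qed

section \<open>The hedge update\<close>

definition hedge_normalizer :: "real \<Rightarrow> 'i \<Rightarrow> ('o, 'a) dpoint \<Rightarrow> real" where
  "hedge_normalizer \<eta> i h = (\<Sum>b\<in>acts G i. pmf (\<pi> i h) b * exp (\<eta> * qdp G i \<pi> h b))"

definition hedge_weight :: "real \<Rightarrow> 'i \<Rightarrow> ('o, 'a) dpoint \<Rightarrow> 'a \<Rightarrow> real" where
  "hedge_weight \<eta> i h b =
    (if reached G \<pi> i h then exp (\<eta> * qdp G i \<pi> h b) / hedge_normalizer \<eta> i h else 1)"

definition hedge_policy :: "real \<Rightarrow> ('i, 'o, 'a) policy" where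
  "hedge_policy \<eta> i h =
    (if reached G \<pi> i h then embed_pmf (\<lambda>b. pmf (\<pi> i h) b * hedge_weight \<eta> i h b) else \<pi> i h)"

lemma hedge_normalizer_pos: "0 < hedge_normalizer \<eta> i h"
proof -
  have "(\<Sum>b\<in>acts G i. pmf (\<pi> i h) b) \<noteq> 0"
    by (simp add: sum_pmf_acts)
  then obtain b where "b \<in> acts G i" "pmf (\<pi> i h) b \<noteq> 0"
    using sum.not_neutral_contains_not_neutral by blast
  moreover from this have "0 < pmf (\<pi> i h) b"
    by (metis less_eq_real_def pmf_nonneg)
  ultimately show ?thesis
    unfolding hedge_normalizer_def by (intro sum_pos2[where i = b]) (simp_all add: finite_acts)
qed

lemma hedge_normalizer_0: "hedge_normalizer 0 i h = 1"
  by (simp add: hedge_normalizer_def sum_pmf_acts)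

lemma hedge_weight_0: "hedge_weight 0 i h b = 1"
  by (simp add: hedge_weight_def hedge_normalizer_0)

lemma pmf_hedge_policy: "pmf (hedge_policy \<eta> i h) b = pmf (\<pi> i h) b * hedge_weight \<eta> i h b"
proof (cases "reached G \<pi> i h")
  case True
  let ?f = "\<lambda>b. pmf (\<pi> i h) b * hedge_weight \<eta> i h b"
  have nonneg: "0 \<le> ?f b" for b
    using hedge_normalizer_pos[of \<eta> i h] by (simp add: hedge_weight_def)
  have "(\<integral>\<^sup>+b. ennreal (?f b) \<partial>count_space UNIV) = (\<Sum>b\<in>acts G i. ennreal (?f b))"
    using pmf_outside_acts by (intro nn_integral_count_space') (auto simp: finite_acts)
  also have "\<dots> = ennreal (\<Sum>b\<in>acts G i. ?f b)"
    using nonneg by (simp add: sum_ennreal)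
  also have "(\<Sum>b\<in>acts G i. ?f b) = 1"
    using True hedge_normalizer_pos[of \<eta> i h]
    by (simp add: hedge_weight_def hedge_normalizer_def flip: sum_divide_distrib)
  finally show ?thesis
    using True nonneg by (simp add: hedge_policy_def pmf_embed_pmf)
qed (simp add: hedge_policy_def hedge_weight_def)

lemma valid_hedge_policy: "valid_policy G (hedge_policy \<eta>)"
  unfolding valid_policy_def
proof (intro allI subsetI)
  fix i h b
  assume "b \<in> set_pmf (hedge_policy \<eta> i h)"
  then have "pmf (\<pi> i h) b * hedge_weight \<eta> i h b \<noteq> 0"
    by (simp add: set_pmf_iff flip: pmf_hedge_policy)
  then show "b \<in> acts G i"
    using pmf_outside_acts[of b i h] by auto
qed

lemma hedge_policy_0: "hedge_policy 0 = \<pi>"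
  by (intro ext pmf_eqI) (simp add: pmf_hedge_policy hedge_weight_0)

lemma hedge_weight_has_real_derivative:
  "((\<lambda>\<eta>. hedge_weight \<eta> i h b) has_real_derivative advantage i h b) (at 0)"
proof (cases "reached G \<pi> i h")
  case True
  have exp: "((\<lambda>\<eta>. exp (\<eta> * qdp G i \<pi> h b')) has_real_derivative qdp G i \<pi> h b') (at 0)" for b'
    by (auto intro!: derivative_eq_intros)
  have "((\<lambda>\<eta>. hedge_normalizer \<eta> i h) has_real_derivative q_mean i h) (at 0)"
    unfolding hedge_normalizer_def q_mean_def by (intro DERIV_sum DERIV_cmult exp)
  from DERIV_quotient[OF exp this]
  have "((\<lambda>\<eta>. exp (\<eta> * qdp G i \<pi> h b) / hedge_normalizer \<eta> i h) has_real_derivative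
      qdp G i \<pi> h b - q_mean i h) (at 0)"
    by (simp add: hedge_normalizer_0)
  with True show ?thesis
    by (simp add: hedge_weight_def advantage_def)
qed (simp add: hedge_weight_def advantage_def)

lemma hedge_update_eq_hedge_policy:
  assumes "hedge_update G \<eta> \<pi> \<pi>'"
  shows "\<pi>' = hedge_policy \<eta>"
proof (intro ext)
  fix i h
  have update: "if reached G \<pi> i h
      then \<forall>b. pmf (\<pi>' i h) b = pmf (\<pi> i h) b * exp (\<eta> * qdp G i \<pi> h b) / hedge_normalizer \<eta> i h
      else \<pi>' i h = \<pi> i h"
    using assms[unfolded hedge_update_def hedge_normalizer_def[symmetric], rule_format, of i h] .
  show "\<pi>' i h = hedge_policy \<eta> i h"
  proof (cases "reached G \<pi> i h")
    case True
    with update show ?thesis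
      by (intro pmf_eqI) (simp add: pmf_hedge_policy hedge_weight_def)
  next
    case False
    with update show ?thesis
      by (simp add: hedge_policy_def)
  qed
qed

lemma hedge_policy_eq_self:
  assumes "\<And>i h b b'. reached G \<pi> i h \<Longrightarrow> b \<in> acts G i \<Longrightarrow> b' \<in> acts G i \<Longrightarrow>
    qdp G i \<pi> h b = qdp G i \<pi> h b'"
  shows "hedge_policy \<eta> = \<pi>"
proof (intro ext pmf_eqI)
  fix i h b
  show "pmf (hedge_policy \<eta> i h) b = pmf (\<pi> i h) b"
  proof (cases "reached G \<pi> i h \<and> b \<in> acts G i")
    case True
    then have "hedge_normalizer \<eta> i h = (\<Sum>b'\<in>acts G i. pmf (\<pi> i h) b' * exp (\<eta> * qdp G i \<pi> h b))"
      unfolding hedge_normalizer_def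
    proof (intro sum.cong refl)
      fix b' assume "b' \<in> acts G i"
      with True have "qdp G i \<pi> h b' = qdp G i \<pi> h b"
        using assms by blast
      then show "pmf (\<pi> i h) b' * exp (\<eta> * qdp G i \<pi> h b') = pmf (\<pi> i h) b' * exp (\<eta> * qdp G i \<pi> h b)"
        by simp
    qed
    also have "\<dots> = exp (\<eta> * qdp G i \<pi> h b)"
      by (simp add: sum_pmf_acts flip: sum_distrib_right)
    finally show ?thesis
      using True by (simp add: pmf_hedge_policy hedge_weight_def)
  next
    case False
    then show ?thesis
      by (auto simp: pmf_hedge_policy hedge_weight_def pmf_outside_acts)
  qed
qed

lemma hedge_policy_improves:
  assumes common: "common_payoff G" and mixed: "fully_mixed G \<pi>"
  shows "\<exists>\<eta>0>0. \<forall>\<eta>. 0 < \<eta> \<and> \<eta> < \<eta>0 \<longrightarrow>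
    hedge_policy \<eta> = \<pi> \<or> (\<forall>i. J G i \<pi> < J G i (hedge_policy \<eta>))"
proof (cases "\<exists>j h b1 b2. reached G \<pi> j h \<and> b1 \<in> acts G j \<and> b2 \<in> acts G j \<and>
    qdp G j \<pi> h b1 \<noteq> qdp G j \<pi> h b2")
  case True
  then obtain j h b1 b2 where j: "reached G \<pi> j h" "b1 \<in> acts G j" "b2 \<in> acts G j" "qdp G j \<pi> h b1 \<noteq> qdp G j \<pi> h b2"
    by blast
  define D where "D = (\<Sum>k\<in>UNIV. measure_pmf.expectation (traj G \<pi>)
    (\<lambda>tr. ret G k tr * (\<Sum>t<horizon G. advantage k (Hi G k t tr) (snd (tr ! t) k))))"
  have "((\<lambda>\<eta>. J G j (hedge_policy \<eta>)) has_real_derivative D) (at 0)"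
    unfolding D_def using common valid_hedge_policy pmf_hedge_policy hedge_weight_0 hedge_weight_has_real_derivative
    by (rule common_payoff_J_has_real_derivative)
  moreover have "0 < D"
    unfolding D_def using expectation_ret_sum_advantage_pos[OF mixed j]
    by (intro sum_pos2[where i = j] expectation_ret_sum_advantage_nonneg) auto
  ultimately obtain \<eta>0 where "\<eta>0 > 0"
    and increase: "\<And>\<eta>. 0 < \<eta> \<Longrightarrow> \<eta> < \<eta>0 \<Longrightarrow> J G j \<pi> < J G j (hedge_policy \<eta>)"
    using DERIV_pos_inc_right[of "\<lambda>\<eta>. J G j (hedge_policy \<eta>)"] hedge_policy_0 by force
  have J_eq: "J G i \<sigma> = J G j \<sigma>" if "valid_policy G \<sigma>" for i \<sigma>
    using common that unfolding common_payoff_def by blast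
  show ?thesis
  proof (intro exI[of _ \<eta>0] conjI allI impI disjI2)
    fix \<eta> i
    assume "0 < \<eta> \<and> \<eta> < \<eta>0"
    then show "J G i \<pi> < J G i (hedge_policy \<eta>)"
      using increase[of \<eta>] J_eq[OF valid, of i] J_eq[OF valid_hedge_policy, of i \<eta>] by simp
  qed (rule \<open>\<eta>0 > 0\<close>)
next
  case False
  then have "hedge_policy \<eta> = \<pi>" for \<eta>
    by (intro hedge_policy_eq_self) blast
  then show ?thesis
    by (intro exI[of _ 1]) auto
qed

end

theorem theorem1:
  fixes G :: "('s::finite, 'i::finite, 'a, 'o::finite) posg"
    and \<pi> :: "('i, 'o, 'a) policy"
  assumes "wf_posg G"
    and "common_payoff G"
    and "valid_policy G \<pi>"
    and "fully_mixed G \<pi>"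
  shows "\<exists>\<eta>0>0. \<forall>\<eta> \<pi>'. 0 < \<eta> \<and> \<eta> < \<eta>0 \<and> hedge_update G \<eta> \<pi> \<pi>' \<longrightarrow>
           (\<forall>i. J G i \<pi>' \<ge> J G i \<pi>) \<and> (\<pi>' \<noteq> \<pi> \<longrightarrow> (\<forall>i. J G i \<pi>' > J G i \<pi>))"
proof -
  interpret posg_policy G \<pi>
    using assms(1,3) by unfold_locales
  obtain \<eta>0 where "\<eta>0 > 0"
    and improves: "\<And>\<eta>. 0 < \<eta> \<Longrightarrow> \<eta> < \<eta>0 \<Longrightarrow>
      hedge_policy \<eta> = \<pi> \<or> (\<forall>i. J G i \<pi> < J G i (hedge_policy \<eta>))"
    using hedge_policy_improves[OF assms(2,4)] by blast
  have "(\<forall>i. J G i \<pi>' \<ge> J G i \<pi>) \<and> (\<pi>' \<noteq> \<pi> \<longrightarrow> (\<forall>i. J G i \<pi>' > J G i \<pi>))"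
    if "0 < \<eta>" "\<eta> < \<eta>0" "hedge_update G \<eta> \<pi> \<pi>'" for \<eta> \<pi>'
    using improves[OF that(1,2)] hedge_update_eq_hedge_policy[OF that(3)] by (auto intro: less_imp_le)
  with \<open>\<eta>0 > 0\<close> show ?thesis
    by blast
qed

end
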